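(* Let $\Omega=A_1\cup\dots\cup A_n$ be a disjoint union of $n$ nonempty sets, let $\mathcal B$ be the $\sigma$-algebra generated by $\{A_1,\dots,A_n\}$, and let $\mu$ be the positive measure on $(\Omega,\mathcal B)$ with $\mu(A_i)=a_i>0$ for $i=1,\dots,n$. Let $\mathcal R=\{v\in\{-1,0,1\}^n:\sum_{i=1}^n v_ia_i=0\}$. Then condition $(\mathcal L)$ uniquely determines $\mu$ (that is, every signed measure $\nu$ on $(\Omega,\mathcal B)$ satisfying $(\mathcal L)$ with respect to $\mu$ is of the form $\nu=\alpha\mu$ for some $\alpha\in\mathbb R$) if and only if the linear span of $\mathcal R$ in $\mathbb R^n$ has dimension $n-1$.
   Context: A signed measure $\nu$ satisfies condition $(\mathcal L)$ with respect to $\mu$ if for all $A,B\in\mathcal B$ with $\mu(A)=\mu(B)\neq\pm\infty$ one has $\nu(A)=\nu(B)\neq\pm\infty$. *)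

theory Defs
  imports "HOL-Probability.Probability"
begin

definition signed_measure :: "'a measure \<Rightarrow> ('a set \<Rightarrow> real) \<Rightarrow> bool" where
  "signed_measure M \<nu> \<longleftrightarrow> \<nu> {} = 0 \<and>
     (\<forall>F :: nat \<Rightarrow> 'a set. range F \<subseteq> sets M \<longrightarrow> disjoint_family F \<longrightarrow>
        (\<lambda>i. \<nu> (F i)) sums \<nu> (\<Union>i. F i))"

text \<open>Condition (L): for all A, B in sets M with mu(A) = mu(B) finite, nu(A) = nu(B)
  (finiteness of nu(A), nu(B) is automatic for real-valued nu).\<close>
definition condition_L :: "'a measure \<Rightarrow> ('a set \<Rightarrow> real) \<Rightarrow> bool" where
  "condition_L \<mu> \<nu> \<longleftrightarrow> (\<forall>A\<in>sets \<mu>. \<forall>B\<in>sets \<mu>.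
      emeasure \<mu> A = emeasure \<mu> B \<and> emeasure \<mu> A \<noteq> \<infinity> \<longrightarrow> \<nu> A = \<nu> B)"

end

theory Submission
  imports Defs
begin

text \<open>The sigma-algebra generated by a finite partition consists of the unions of atoms, so a
  signed measure \<open>\<nu>\<close> is the same thing as a weight vector \<open>b i = \<nu> (A i)\<close>. Two measurable sets
  have equal \<open>\<mu>\<close>-measure iff the difference of their atom indicators is a sign vector in \<open>R\<close>,
  and every element of \<open>R\<close> arises this way; hence \<open>\<nu>\<close> satisfies (L) iff \<open>b\<close> is orthogonal
  to \<open>R\<close>. So (L) determines \<open>\<mu>\<close> iff the orthogonal complement of \<open>R\<close> is the line through
  the weight vector \<open>a\<close>, which is nonzero and lies in it; as that complement has dimension
  \<open>n - dim (span R)\<close>, this means \<open>dim (span R) = n - 1\<close>.\<close>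

lemma signed_measure_Un:
  assumes "signed_measure M \<nu>" "X \<in> sets M" "Y \<in> sets M" "X \<inter> Y = {}"
  shows "\<nu> (X \<union> Y) = \<nu> X + \<nu> Y"
proof -
  define F where "F k = (if k = 0 then X else if k = 1 then Y else {})" for k :: nat
  have "range F \<subseteq> sets M"
    using assms(2,3) by (auto simp: F_def)
  moreover have "disjoint_family F"
    using assms(4) by (auto simp: disjoint_family_on_def F_def)
  ultimately have "(\<lambda>k. \<nu> (F k)) sums \<nu> (\<Union>k. F k)"
    using assms(1) by (simp add: signed_measure_def)
  moreover have "(\<lambda>k. \<nu> (F k)) sums (\<Sum>k\<in>{0, 1}. \<nu> (F k))"
    using assms(1) by (intro sums_finite) (auto simp: signed_measure_def F_def)
  moreover have "(\<Union>k. F k) = X \<union> Y"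
    by (auto simp: F_def split: if_splits)
  ultimately show ?thesis
    by (simp add: F_def sums_unique2)
qed

lemma signed_measure_finite_UN:
  assumes "signed_measure M \<nu>" "finite I" "B ` I \<subseteq> sets M" "disjoint_family_on B I"
  shows "\<nu> (\<Union>i\<in>I. B i) = (\<Sum>i\<in>I. \<nu> (B i))"
  using assms(2-)
proof (induction I rule: finite_induct)
  case empty
  then show ?case using assms(1) by (simp add: signed_measure_def)
next
  case (insert j I)
  then have "B j \<inter> (\<Union>i\<in>I. B i) = {}" "disjoint_family_on B I"
    by (auto simp: disjoint_family_on_def)
  moreover have "(\<Union>i\<in>I. B i) \<in> sets M"
    using insert by (intro sets.finite_UN) auto
  ultimately show ?case
    using insert by (simp add: signed_measure_Un[OF assms(1)])
qed

lemma sum_indicator_diff_mult: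
  fixes f :: "'n::finite \<Rightarrow> real"
  shows "(\<Sum>i\<in>UNIV. (indicator S i - indicator T i) * f i) = sum f S - sum f T"
  by (simp add: mult.commute[of _ "f _"] right_diff_distrib sum_subtractf)

lemma sign_vector_eq_indicator_diff:
  fixes v :: "real^'n"
  assumes "\<forall>i. v $ i \<in> {-1, 0, 1}"
  shows "v = (\<chi> i. indicator {i. v $ i = 1} i - indicator {i. v $ i = -1} i)"
  using assms by (auto simp: vec_eq_iff indicator_def)

lemma orthogonal_complement_subset_line_iff_dim:
  fixes a :: "'a::euclidean_space"
  assumes "a \<noteq> 0" and "\<forall>x\<in>S. orthogonal x a"
  shows "(\<forall>b. (\<forall>x\<in>S. orthogonal x b) \<longrightarrow> b \<in> span {a}) \<longleftrightarrow> dim (span S) = DIM('a) - 1"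
proof -
  define W where "W = {b. \<forall>x\<in>S. orthogonal x b}"
  have "W = {b. \<forall>x\<in>span S. orthogonal x b}"
    unfolding W_def by (metis orthogonal_commute orthogonal_to_span span_base)
  then have dim_W: "dim W + dim (span S) = DIM('a)"
    using dim_subspace_orthogonal_to_vectors[of "span S" UNIV] by simp
  have "subspace W"
    unfolding W_def by (rule subspace_orthogonal_to_vectors)
  moreover have line_W: "span {a} \<subseteq> W"
    using assms(2) \<open>subspace W\<close> unfolding W_def by (simp add: span_minimal)
  moreover have dim_line: "dim (span {a}) = 1"
    using assms(1) by simp
  ultimately have "W \<subseteq> span {a} \<longleftrightarrow> dim W = 1"
    by (metis antisym dim_subset subspace_dim_equal subspace_span)
  moreover have "1 \<le> dim W"
    using dim_subset[OF line_W] dim_line by simp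
  ultimately show ?thesis
    using dim_W unfolding W_def by auto
qed

locale finite_partition_space =
  fixes \<Omega> :: "'a set" and A :: "'n::finite \<Rightarrow> 'a set" and \<mu> :: "'a measure"
  assumes Omega_eq: "\<Omega> = (\<Union>i. A i)"
    and disjoint_atoms: "disjoint_family A"
    and atom_nonempty: "\<And>i. A i \<noteq> {}"
    and sets_eq: "sets \<mu> = sigma_sets \<Omega> (range A)"
begin

definition atoms :: "'a set \<Rightarrow> 'n set" where
  "atoms X = {i. A i \<subseteq> X}"

lemma atom_unique: "x \<in> A i \<Longrightarrow> x \<in> A j \<Longrightarrow> i = j"
  using disjoint_atoms by (auto simp: disjoint_family_on_def)

lemma atom_in_sets: "A i \<in> sets \<mu>"
  by (simp add: sets_eq)

lemma atoms_UN: "atoms (\<Union>i\<in>S. A i) = S"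
proof -
  have "A i \<subseteq> (\<Union>j\<in>S. A j) \<Longrightarrow> i \<in> S" for i
    using atom_nonempty[of i] atom_unique by blast
  then show ?thesis
    by (auto simp: atoms_def)
qed

lemma UN_atoms_in_sets: "(\<Union>i\<in>S. A i) \<in> sets \<mu>"
  using atom_in_sets by (intro sets.finite_UN) auto

lemma sets_eq_unions_of_atoms: "sets \<mu> = range (\<lambda>S. \<Union>i\<in>S. A i)"
proof
  show "sets \<mu> \<subseteq> range (\<lambda>S. \<Union>i\<in>S. A i)"
  proof
    fix X assume "X \<in> sets \<mu>"
    then have "X \<in> sigma_sets \<Omega> (range A)"
      by (simp add: sets_eq)
    then show "X \<in> range (\<lambda>S. \<Union>i\<in>S. A i)"
    proof induction
      case (Basic X)
      then obtain j where "X = (\<Union>i\<in>{j}. A i)" by auto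
      then show ?case by blast
    next
      case Empty
      have "{} = (\<Union>i\<in>{}. A i)" by simp
      then show ?case by blast
    next
      case (Compl X)
      then obtain S where "X = (\<Union>i\<in>S. A i)" by blast
      then have "\<Omega> - X = (\<Union>i\<in>-S. A i)"
        using Omega_eq atom_unique by blast
      then show ?case by blast
    next
      case (Union F)
      have "F k = (\<Union>i\<in>atoms (F k). A i)" for k
        using Union.IH[of k] atoms_UN by auto
      then have "(\<Union>k. F k) = (\<Union>i\<in>(\<Union>k. atoms (F k)). A i)"
        by blast
      then show ?case by blast
    qed
  qed
qed (use UN_atoms_in_sets in blast)

lemma atoms_atom: "atoms (A i) = {i}"
  using atoms_UN[of "{i}"] by simp

lemma UN_atoms: "X \<in> sets \<mu> \<Longrightarrow> (\<Union>i\<in>atoms X. A i) = X"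
  using atoms_UN by (auto simp: sets_eq_unions_of_atoms)

lemma mem_atom_iff:
  assumes "X \<in> sets \<mu>" and "x \<in> A i"
  shows "x \<in> X \<longleftrightarrow> i \<in> atoms X"
proof
  assume "x \<in> X"
  then obtain j where "j \<in> atoms X" "x \<in> A j"
    using UN_atoms[OF assms(1)] by blast
  then show "i \<in> atoms X"
    using assms(2) atom_unique by blast
qed (use assms(2) in \<open>auto simp: atoms_def\<close>)

lemma emeasure_eq_sum_atoms:
  "X \<in> sets \<mu> \<Longrightarrow> emeasure \<mu> X = (\<Sum>i\<in>atoms X. emeasure \<mu> (A i))"
  using sum_emeasure[of A "atoms X" \<mu>] disjoint_family_on_mono[OF subset_UNIV disjoint_atoms]
  by (simp add: atom_in_sets image_subset_iff UN_atoms)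

lemma signed_measure_eq_sum_atoms:
  "signed_measure \<mu> \<nu> \<Longrightarrow> X \<in> sets \<mu> \<Longrightarrow> \<nu> X = (\<Sum>i\<in>atoms X. \<nu> (A i))"
  using signed_measure_finite_UN[of \<mu> \<nu> "atoms X" A] disjoint_family_on_mono[OF subset_UNIV disjoint_atoms]
  by (simp add: atom_in_sets image_subset_iff UN_atoms)

lemma signed_measure_sum_atoms: "signed_measure \<mu> (\<lambda>X. \<Sum>i\<in>atoms X. b i)"
  unfolding signed_measure_def
proof (intro conjI allI impI)
  show "(\<Sum>i\<in>atoms {}. b i) = 0"
    using atoms_UN[of "{}"] by simp
next
  fix F :: "nat \<Rightarrow> 'a set"
  assume F: "range F \<subseteq> sets \<mu>" "disjoint_family F"
  have "(\<lambda>k. if i \<in> atoms (F k) then b i else 0) sums (if i \<in> atoms (\<Union>k. F k) then b i else 0)" for i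
  proof -
    obtain x where x: "x \<in> A i"
      using atom_nonempty by blast
    have "(\<Union>k. F k) \<in> sets \<mu>"
      using F(1) by blast
    then have "i \<in> atoms (\<Union>k. F k) \<longleftrightarrow> (\<exists>k. i \<in> atoms (F k))"
      using mem_atom_iff[OF _ x] F(1) by blast
    moreover have "i \<in> atoms (F k) \<longleftrightarrow> k = k'" if "i \<in> atoms (F k')" for k k'
      using that F(2) x unfolding atoms_def disjoint_family_on_def by blast
    ultimately show ?thesis
      using sums_single[of _ "\<lambda>_. b i"] by (cases "i \<in> atoms (\<Union>k. F k)") auto
  qed
  then have "(\<lambda>k. \<Sum>i\<in>UNIV. if i \<in> atoms (F k) then b i else 0) sums
             (\<Sum>i\<in>UNIV. if i \<in> atoms (\<Union>k. F k) then b i else 0)"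
    by (rule sums_sum)
  then show "(\<lambda>k. \<Sum>i\<in>atoms (F k). b i) sums (\<Sum>i\<in>atoms (\<Union>k. F k). b i)"
    by (simp add: sum.If_cases)
qed

end

lemma condition_L_cong:
  "(\<And>X. X \<in> sets M \<Longrightarrow> \<nu> X = \<nu>' X) \<Longrightarrow> condition_L M \<nu> \<longleftrightarrow> condition_L M \<nu>'"
  by (simp add: condition_L_def)

lemma orthogonal_vec_iff: "orthogonal v (b :: real^'n) \<longleftrightarrow> (\<Sum>i\<in>UNIV. v $ i * b $ i) = 0"
  by (simp add: orthogonal_def inner_vec_def)

definition sign_relations :: "('n::finite \<Rightarrow> real) \<Rightarrow> (real^'n) set" where
  "sign_relations a = {v. (\<forall>i. v $ i \<in> {-1, 0, 1}) \<and> (\<Sum>i\<in>UNIV. v $ i * a i) = 0}"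

locale finite_partition_measure = finite_partition_space \<Omega> A \<mu>
  for \<Omega> and A :: "'n::finite \<Rightarrow> 'a set" and \<mu> +
  fixes a :: "'n \<Rightarrow> real"
  assumes emeasure_atom: "\<And>i. emeasure \<mu> (A i) = ennreal (a i)"
    and atom_weight_pos: "\<And>i. a i > 0"
begin

lemma emeasure_eq_sum_weights: "X \<in> sets \<mu> \<Longrightarrow> emeasure \<mu> X = ennreal (sum a (atoms X))"
  by (simp add: emeasure_eq_sum_atoms emeasure_atom less_imp_le atom_weight_pos)

lemma measure_eq_sum_weights: "X \<in> sets \<mu> \<Longrightarrow> measure \<mu> X = sum a (atoms X)"
  by (simp add: measure_def emeasure_eq_sum_weights sum_nonneg less_imp_le atom_weight_pos)

lemma emeasure_eq_iff_sum_weights_eq: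
  "X \<in> sets \<mu> \<Longrightarrow> Y \<in> sets \<mu> \<Longrightarrow> emeasure \<mu> X = emeasure \<mu> Y \<longleftrightarrow> sum a (atoms X) = sum a (atoms Y)"
  by (simp add: emeasure_eq_sum_weights sum_nonneg less_imp_le atom_weight_pos)

lemma condition_L_sum_atoms_iff:
  "condition_L \<mu> (\<lambda>X. \<Sum>i\<in>atoms X. b $ i) \<longleftrightarrow> (\<forall>v\<in>sign_relations a. orthogonal v b)"
proof
  assume L: "condition_L \<mu> (\<lambda>X. \<Sum>i\<in>atoms X. b $ i)"
  show "\<forall>v\<in>sign_relations a. orthogonal v b"
  proof
    fix v assume v: "v \<in> sign_relations a"
    define P where "P = {i. v $ i = 1}"
    define N where "N = {i. v $ i = -1}"
    have v_eq: "v = (\<chi> i. indicator P i - indicator N i)"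
      using v sign_vector_eq_indicator_diff unfolding sign_relations_def P_def N_def by blast
    have "(\<Sum>i\<in>UNIV. v $ i * a i) = 0"
      using v by (simp add: sign_relations_def)
    then have "sum a P = sum a N"
      by (subst (asm) v_eq) (simp add: sum_indicator_diff_mult)
    then have "emeasure \<mu> (\<Union>i\<in>P. A i) = emeasure \<mu> (\<Union>i\<in>N. A i)"
      and "emeasure \<mu> (\<Union>i\<in>P. A i) \<noteq> \<infinity>"
      by (simp_all add: emeasure_eq_sum_weights UN_atoms_in_sets atoms_UN)
    with L have "(\<Sum>i\<in>atoms (\<Union>i\<in>P. A i). b $ i) = (\<Sum>i\<in>atoms (\<Union>i\<in>N. A i). b $ i)"
      unfolding condition_L_def using UN_atoms_in_sets by blast
    then show "orthogonal v b"
      by (subst v_eq) (simp add: orthogonal_vec_iff sum_indicator_diff_mult atoms_UN)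
  qed
next
  assume orth: "\<forall>v\<in>sign_relations a. orthogonal v b"
  show "condition_L \<mu> (\<lambda>X. \<Sum>i\<in>atoms X. b $ i)"
    unfolding condition_L_def
  proof (intro ballI impI)
    fix X Y assume XY: "X \<in> sets \<mu>" "Y \<in> sets \<mu>"
      and "emeasure \<mu> X = emeasure \<mu> Y \<and> emeasure \<mu> X \<noteq> \<infinity>"
    then have "sum a (atoms X) = sum a (atoms Y)"
      by (simp add: emeasure_eq_iff_sum_weights_eq)
    then have "(\<chi> i. indicator (atoms X) i - indicator (atoms Y) i) \<in> sign_relations a"
      unfolding sign_relations_def by (simp add: sum_indicator_diff_mult) (simp add: indicator_def)
    with orth have "orthogonal (\<chi> i. indicator (atoms X) i - indicator (atoms Y) i) b" ..
    then show "(\<Sum>i\<in>atoms X. b $ i) = (\<Sum>i\<in>atoms Y. b $ i)"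
      by (simp add: orthogonal_vec_iff sum_indicator_diff_mult)
  qed
qed

lemma condition_L_determines_measure_iff:
  "(\<forall>\<nu>. signed_measure \<mu> \<nu> \<and> condition_L \<mu> \<nu> \<longrightarrow> (\<exists>\<alpha>::real. \<forall>X\<in>sets \<mu>. \<nu> X = \<alpha> * measure \<mu> X))
   \<longleftrightarrow> (\<forall>b. (\<forall>v\<in>sign_relations a. orthogonal v b) \<longrightarrow> b \<in> span {\<chi> i. a i})"
proof
  assume determined: "\<forall>\<nu>. signed_measure \<mu> \<nu> \<and> condition_L \<mu> \<nu> \<longrightarrow>
    (\<exists>\<alpha>::real. \<forall>X\<in>sets \<mu>. \<nu> X = \<alpha> * measure \<mu> X)"
  show "\<forall>b. (\<forall>v\<in>sign_relations a. orthogonal v b) \<longrightarrow> b \<in> span {\<chi> i. a i}"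
  proof (intro allI impI)
    fix b :: "real^'n" assume "\<forall>v\<in>sign_relations a. orthogonal v b"
    then have "condition_L \<mu> (\<lambda>X. \<Sum>i\<in>atoms X. b $ i)"
      by (simp add: condition_L_sum_atoms_iff)
    then obtain \<alpha> where \<alpha>: "\<forall>X\<in>sets \<mu>. (\<Sum>i\<in>atoms X. b $ i) = \<alpha> * measure \<mu> X"
      using determined signed_measure_sum_atoms by blast
    have "b $ i = \<alpha> * a i" for i
      using \<alpha>[rule_format, OF atom_in_sets[of i]] by (simp add: atoms_atom measure_eq_sum_weights[OF atom_in_sets])
    then have "b = \<alpha> *\<^sub>R (\<chi> i. a i)"
      by (simp add: vec_eq_iff)
    then show "b \<in> span {\<chi> i. a i}"
      by (simp add: span_base span_mul)
  qed
next
  assume line: "\<forall>b. (\<forall>v\<in>sign_relations a. orthogonal v b) \<longrightarrow> b \<in> span {\<chi> i. a i}"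
  show "\<forall>\<nu>. signed_measure \<mu> \<nu> \<and> condition_L \<mu> \<nu> \<longrightarrow>
    (\<exists>\<alpha>::real. \<forall>X\<in>sets \<mu>. \<nu> X = \<alpha> * measure \<mu> X)"
  proof (intro allI impI)
    fix \<nu> assume \<nu>: "signed_measure \<mu> \<nu> \<and> condition_L \<mu> \<nu>"
    define b :: "real^'n" where "b = (\<chi> i. \<nu> (A i))"
    have \<nu>_eq: "\<nu> X = (\<Sum>i\<in>atoms X. b $ i)" if "X \<in> sets \<mu>" for X
      using \<nu> that by (simp add: b_def signed_measure_eq_sum_atoms)
    then have "condition_L \<mu> (\<lambda>X. \<Sum>i\<in>atoms X. b $ i)"
      using \<nu> condition_L_cong[of \<mu> \<nu> "\<lambda>X. \<Sum>i\<in>atoms X. b $ i"] by simp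
    then have "b \<in> span {\<chi> i. a i}"
      using line by (simp add: condition_L_sum_atoms_iff)
    then obtain \<alpha> where "b = \<alpha> *\<^sub>R (\<chi> i. a i)"
      by (auto simp: span_singleton)
    then have "\<forall>X\<in>sets \<mu>. \<nu> X = \<alpha> * measure \<mu> X"
      by (simp add: \<nu>_eq measure_eq_sum_weights sum_distrib_left)
    then show "\<exists>\<alpha>::real. \<forall>X\<in>sets \<mu>. \<nu> X = \<alpha> * measure \<mu> X" ..
  qed
qed

end

theorem proposition4p1:
  fixes \<Omega> :: "'a set" and A :: "'n::finite \<Rightarrow> 'a set" and a :: "'n \<Rightarrow> real"
    and \<mu> :: "'a measure"
  assumes "\<Omega> = (\<Union>i. A i)"
    and "disjoint_family A"
    and "\<And>i. A i \<noteq> {}"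
    and "space \<mu> = \<Omega>"
    and "sets \<mu> = sigma_sets \<Omega> (range A)"
    and "\<And>i. emeasure \<mu> (A i) = ennreal (a i)"
    and "\<And>i. a i > 0"
  shows "(\<forall>\<nu>. signed_measure \<mu> \<nu> \<and> condition_L \<mu> \<nu> \<longrightarrow>
            (\<exists>\<alpha>::real. \<forall>X\<in>sets \<mu>. \<nu> X = \<alpha> * measure \<mu> X))
     \<longleftrightarrow> dim (span {v :: real^'n. (\<forall>i. v $ i \<in> {-1, 0, 1}) \<and> (\<Sum>i\<in>UNIV. v $ i * a i) = 0})
          = CARD('n) - 1"
proof -
  interpret finite_partition_measure \<Omega> A \<mu> a
    using assms by unfold_locales auto
  have "(\<chi> i. a i) \<noteq> 0"
    using atom_weight_pos[of undefined] by (auto simp: vec_eq_iff intro: exI[of _ undefined])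
  moreover have "\<forall>v\<in>sign_relations a. orthogonal v (\<chi> i. a i)"
    by (simp add: sign_relations_def orthogonal_vec_iff)
  ultimately show ?thesis
    unfolding sign_relations_def[symmetric] condition_L_determines_measure_iff
    by (simp add: orthogonal_complement_subset_line_iff_dim)
qed

end
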